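(* Let $\{c_n\}_{n\in\mathbb{N}^+}$ be a sequence of real numbers with $c_n\to\infty$ as $n\to\infty$. Then there exists a continuous function $f:\mathbb{R}\to\mathbb{R}$ which is Lebesgue integrable on $\mathbb{R}$ and such that for every real $x\neq 0$, $$\limsup_{n\to\infty} c_n\, f(n\,x)=\infty,$$ where $n$ ranges over the positive integers.
   Context: $\mathbb{N}^+=\{1,2,\dots\}$. *)

theory Defs
  imports "HOL-Analysis.Analysis"
begin

end

theory Submission
  imports Defs
begin

text \<open>
  Place on the positive axis trapezoidal bumps of height \<open>1/k\<^sup>3\<close> on plateaus
  \<open>[N\<^sub>k, N\<^sub>k + k]\<close> of length \<open>k\<close>; their sum \<open>F\<close> is continuous and integrable since
  \<open>\<Sum> k/k\<^sup>3 < \<infinity>\<close>, and so is \<open>f(y) = F(y) + F(-y)\<close>. Given \<open>x \<noteq> 0\<close> and \<open>k \<ge> |x|\<close>,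
  some multiple \<open>m|x|\<close> falls on the \<open>k\<close>-th plateau, and then \<open>m \<ge> N\<^sub>k/k\<close>.
  Choosing \<open>N\<^sub>k\<close> so large that \<open>c\<^sub>m \<ge> k\<^sup>4\<close> for all \<open>m \<ge> N\<^sub>k/k\<close> gives
  \<open>c\<^sub>m f(m x) \<ge> k\<close>, for infinitely many \<open>m\<close>.
\<close>

definition trapezoid :: "real \<Rightarrow> real \<Rightarrow> real \<Rightarrow> real" where
  "trapezoid a b t = max 0 (min 1 (min (t - a + 1) (b + 1 - t)))"

lemma trapezoid_nonneg: "0 \<le> trapezoid a b t"
  and trapezoid_le_1: "trapezoid a b t \<le> 1"
  by (auto simp: trapezoid_def)

lemma trapezoid_eq_1: "a \<le> t \<Longrightarrow> t \<le> b \<Longrightarrow> trapezoid a b t = 1"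
  by (simp add: trapezoid_def)

lemma continuous_on_trapezoid: "continuous_on UNIV (trapezoid a b)"
  unfolding trapezoid_def by (intro continuous_intros)

lemma trapezoid_le_indicator: "trapezoid a b t \<le> indicator {a - 1 .. b + 1} t"
  by (auto simp: trapezoid_def indicator_def)

lemma integrable_trapezoid: "integrable lborel (trapezoid a b)"
proof (rule Bochner_Integration.integrable_bound)
  show "integrable lborel (indicator {a - 1 .. b + 1} :: real \<Rightarrow> real)"
    by (rule integrable_real_indicator) (simp_all add: emeasure_lborel_Icc_eq)
  show "trapezoid a b \<in> borel_measurable lborel"
    unfolding trapezoid_def by measurable
qed (use trapezoid_le_indicator trapezoid_nonneg in \<open>auto intro!: AE_I2\<close>)

lemma integral_trapezoid_le:
  assumes "a \<le> b"
  shows "(\<integral>t. trapezoid a b t \<partial>lborel) \<le> b - a + 2"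
proof -
  have "(\<integral>t. trapezoid a b t \<partial>lborel) \<le> (\<integral>t. indicator {a - 1 .. b + 1} t \<partial>lborel)"
    by (intro integral_mono integrable_trapezoid trapezoid_le_indicator integrable_real_indicator)
      (simp_all add: emeasure_lborel_Icc_eq)
  also have "\<dots> = b - a + 2"
    using assms by simp
  finally show ?thesis .
qed

definition bump_series :: "(nat \<Rightarrow> real) \<Rightarrow> (nat \<Rightarrow> real) \<Rightarrow> (nat \<Rightarrow> real) \<Rightarrow> real \<Rightarrow> real" where
  "bump_series w a b t = (\<Sum>k. w k * trapezoid (a k) (b k) t)"

context
  fixes w a b :: "nat \<Rightarrow> real"
  assumes weight_nonneg: "\<And>k. 0 \<le> w k"
    and summable_weight: "summable w"
begin

lemma norm_bump_le_weight: "norm (w k * trapezoid (a k) (b k) t) \<le> w k"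
  using weight_nonneg[of k] trapezoid_nonneg[of "a k" "b k" t] trapezoid_le_1[of "a k" "b k" t]
  by (simp add: mult_left_le)

lemma summable_bumps: "summable (\<lambda>k. w k * trapezoid (a k) (b k) t)"
  by (rule summable_comparison_test[OF _ summable_weight]) (use norm_bump_le_weight in blast)

lemma bump_series_nonneg: "0 \<le> bump_series w a b t"
  unfolding bump_series_def
  by (intro suminf_nonneg summable_bumps mult_nonneg_nonneg weight_nonneg trapezoid_nonneg)

lemma bump_series_ge_weight:
  assumes "a k \<le> t" "t \<le> b k"
  shows "w k \<le> bump_series w a b t"
proof -
  have "(\<Sum>i\<in>{k}. w i * trapezoid (a i) (b i) t) \<le> bump_series w a b t"
    unfolding bump_series_def
    by (intro sum_le_suminf summable_bumps mult_nonneg_nonneg weight_nonneg trapezoid_nonneg) auto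
  then show ?thesis
    using assms by (simp add: trapezoid_eq_1)
qed

lemma continuous_on_bump_series: "continuous_on UNIV (bump_series w a b)"
proof (rule uniform_limit_theorem)
  show "uniform_limit UNIV (\<lambda>n t. \<Sum>k<n. w k * trapezoid (a k) (b k) t) (bump_series w a b) sequentially"
    unfolding bump_series_def by (rule Weierstrass_m_test[OF norm_bump_le_weight summable_weight])
  show "\<forall>\<^sub>F n in sequentially. continuous_on UNIV (\<lambda>t. \<Sum>k<n. w k * trapezoid (a k) (b k) t)"
    using continuous_on_trapezoid by (intro always_eventually allI continuous_intros) auto
qed simp

lemma integrable_bump_series:
  assumes "\<And>k. a k \<le> b k"
    and "summable (\<lambda>k. w k * (b k - a k + 2))"
  shows "integrable lborel (bump_series w a b)"
  unfolding bump_series_def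
proof (rule integrable_suminf)
  show "integrable lborel (\<lambda>t. w k * trapezoid (a k) (b k) t)" for k
    using integrable_trapezoid by simp
  show "AE t in lborel. summable (\<lambda>k. norm (w k * trapezoid (a k) (b k) t))"
    using summable_bumps weight_nonneg trapezoid_nonneg by (simp add: abs_mult)
  have "(\<integral>t. norm (w k * trapezoid (a k) (b k) t) \<partial>lborel) \<le> w k * (b k - a k + 2)" for k
    using weight_nonneg[of k] trapezoid_nonneg integral_trapezoid_le[OF assms(1)]
    by (simp add: abs_mult mult_left_mono)
  then show "summable (\<lambda>k. \<integral>t. norm (w k * trapezoid (a k) (b k) t) \<partial>lborel)"
    by (intro summable_comparison_test[OF _ assms(2)]) auto
qed

end

lemma summable_plateau_weights: "summable (\<lambda>k. (real (Suc k) + 2) / real (Suc k) ^ 3)"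
proof (rule summable_comparison_test)
  have "summable (\<lambda>k. inverse (real (Suc k) ^ 2))"
    using inverse_power_summable[of 2, where 'a = real] by (subst summable_Suc_iff) simp
  then show "summable (\<lambda>k. 3 / real (Suc k) ^ 2)"
    using summable_mult[of _ 3] by (simp add: divide_inverse)
  have "(K + 2) / K ^ 3 \<le> 3 / K ^ 2" if "1 \<le> K" for K :: real
  proof -
    have "(K + 2) / K ^ 3 \<le> 3 * K / K ^ 3"
      using that by (intro divide_right_mono) auto
    also have "\<dots> = 3 / K ^ 2"
      using that by (simp add: power3_eq_cube power2_eq_square)
    finally show ?thesis .
  qed
  from this[of "real (Suc k)" for k]
  show "\<exists>N. \<forall>k\<ge>N. norm ((real (Suc k) + 2) / real (Suc k) ^ 3) \<le> 3 / real (Suc k) ^ 2"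
    by auto
qed

lemma exists_multiple_in_interval:
  fixes a A :: real
  assumes "0 < a" "0 \<le> A"
  obtains m :: nat where "A \<le> real m * a" "real m * a \<le> A + a"
proof
  define m where "m = nat \<lceil>A / a\<rceil>"
  have "real m = of_int \<lceil>A / a\<rceil>"
    using assms by (simp add: m_def)
  then have "A / a \<le> real m" "real m < A / a + 1"
    using ceiling_correct[of "A / a"] by linarith+
  then show "A \<le> real m * a" "real m * a \<le> A + a"
    using assms by (auto simp: field_simps)
qed

lemma limsup_ereal_eq_PInfty_if_unbounded:
  fixes X :: "nat \<Rightarrow> real"
  assumes "\<And>B n0. \<exists>n\<ge>n0. B \<le> X n"
  shows "limsup (\<lambda>n. ereal (X n)) = \<infinity>"
proof (rule ccontr)
  assume "limsup (\<lambda>n. ereal (X n)) \<noteq> \<infinity>"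
  then obtain B :: nat where "limsup (\<lambda>n. ereal (X n)) < ereal (real B)"
    using less_PInf_Ex_of_nat by auto
  then have "\<forall>\<^sub>F n in sequentially. ereal (X n) < ereal (real B)"
    using Limsup_le_iff[where F = sequentially and X = "\<lambda>n. ereal (X n)"] by blast
  then have "\<forall>\<^sub>F n in sequentially. X n < real B"
    by simp
  moreover have "\<exists>\<^sub>F n in sequentially. real B \<le> X n"
    using assms by (simp add: frequently_sequentially)
  ultimately have "\<exists>\<^sub>F n in sequentially. X n < real B \<and> real B \<le> X n"
    using frequently_eventually_conj by blast
  then have "\<exists>\<^sub>F n in sequentially. False"
    by (rule frequently_elim1) linarith
  then show False
    by simp
qed

lemma limsup_dilates_eq_PInfty_if_plateaus:
  fixes c :: "nat \<Rightarrow> real" and g :: "real \<Rightarrow> real" and M :: "real \<Rightarrow> nat" and N :: "nat \<Rightarrow> real"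
  assumes c_ge: "\<And>B n. M B \<le> n \<Longrightarrow> B \<le> c (Suc n)"
    and N_ge: "\<And>k. real (Suc k) * (real (M (real (Suc k) ^ 4)) + real (Suc k)) \<le> N k"
    and g_plateau: "\<And>k t. N k \<le> \<bar>t\<bar> \<Longrightarrow> \<bar>t\<bar> \<le> N k + real (Suc k) \<Longrightarrow> 1 / real (Suc k) ^ 3 \<le> g t"
    and "x \<noteq> 0"
  shows "limsup (\<lambda>n. ereal (c (Suc n) * g (real (Suc n) * x))) = \<infinity>"
proof (rule limsup_ereal_eq_PInfty_if_unbounded)
  fix B :: real and n0 :: nat
  define k where "k = max n0 (max (nat \<lceil>B\<rceil>) (nat \<lceil>\<bar>x\<bar>\<rceil>))"
  define K where "K = real (Suc k)"
  have K_pos: "0 < K" and B_le_K: "B \<le> K" and x_le_K: "\<bar>x\<bar> \<le> K"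
    by (auto simp: K_def k_def) linarith+
  have N_ge_K: "K * (real (M (K ^ 4)) + K) \<le> N k"
    using N_ge[of k] by (simp add: K_def)
  moreover have "0 \<le> K * (real (M (K ^ 4)) + K)"
    using K_pos by simp
  ultimately obtain m :: nat where m_lower: "N k \<le> real m * \<bar>x\<bar>" and m_upper: "real m * \<bar>x\<bar> \<le> N k + \<bar>x\<bar>"
    using exists_multiple_in_interval[of "\<bar>x\<bar>" "N k"] \<open>x \<noteq> 0\<close> by auto
  have "real m * \<bar>x\<bar> \<le> real m * K"
    using x_le_K by (intro mult_left_mono) auto
  then have "K * (real (M (K ^ 4)) + K) \<le> K * real m"
    using N_ge_K m_lower by (simp add: mult.commute)
  then have "real (M (K ^ 4)) + K \<le> real m"
    using K_pos by simp
  then obtain n where m_eq: "m = Suc n" and n_ge_M: "M (K ^ 4) \<le> n" and n_ge_k: "k \<le> n"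
    by (cases m) (auto simp: K_def)
  have c_large: "K ^ 4 \<le> c (Suc n)"
    using c_ge[OF n_ge_M] .
  have g_large: "1 / K ^ 3 \<le> g (real (Suc n) * x)"
    using g_plateau[of k "real (Suc n) * x"] m_lower m_upper x_le_K
    by (simp add: K_def m_eq abs_mult)
  have "B \<le> K ^ 4 * (1 / K ^ 3)"
    using B_le_K K_pos by (simp add: power_eq_if)
  also have "\<dots> \<le> c (Suc n) * g (real (Suc n) * x)"
    using c_large g_large K_pos by (intro mult_mono) (auto intro: order.trans[OF _ c_large])
  finally show "\<exists>n\<ge>n0. B \<le> c (Suc n) * g (real (Suc n) * x)"
    using n_ge_k by (auto simp: k_def)
qed

lemma exists_integrable_with_plateaus:
  fixes N :: "nat \<Rightarrow> real"
  obtains f :: "real \<Rightarrow> real"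
  where "continuous_on UNIV f" "integrable lborel f"
    and "\<And>k t. N k \<le> \<bar>t\<bar> \<Longrightarrow> \<bar>t\<bar> \<le> N k + real (Suc k) \<Longrightarrow> 1 / real (Suc k) ^ 3 \<le> f t"
proof
  define w where "w k = 1 / real (Suc k) ^ 3" for k
  define F where "F = bump_series w N (\<lambda>k. N k + real (Suc k))"
  have w_nonneg: "0 \<le> w k" for k
    by (simp add: w_def)
  have summable_plateau_mass: "summable (\<lambda>k. w k * (N k + real (Suc k) - N k + 2))"
    using summable_plateau_weights by (simp add: w_def)
  then have summable_w: "summable w"
    by (rule summable_comparison_test') (auto simp: w_def intro!: divide_right_mono)
  have F_nonneg: "0 \<le> F t" for t
    unfolding F_def using w_nonneg summable_w by (rule bump_series_nonneg)
  have F_plateau: "w k \<le> F t" if "N k \<le> t" "t \<le> N k + real (Suc k)" for k t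
    unfolding F_def using w_nonneg summable_w that
    by (rule bump_series_ge_weight[where b = "\<lambda>k. N k + real (Suc k)"])
  have F_continuous: "continuous_on UNIV F"
    unfolding F_def using w_nonneg summable_w by (rule continuous_on_bump_series)
  have F_integrable: "integrable lborel F"
    unfolding F_def by (rule integrable_bump_series[OF w_nonneg summable_w _ summable_plateau_mass]) simp
  show "continuous_on UNIV (\<lambda>y. F y + F (- y))"
    by (intro continuous_intros continuous_on_compose2[OF F_continuous]) auto
  show "integrable lborel (\<lambda>y. F y + F (- y))"
    using F_integrable lborel_integrable_real_affine_iff[of "-1" F 0]
    by (intro Bochner_Integration.integrable_add) simp_all
  show "1 / real (Suc k) ^ 3 \<le> F t + F (- t)"
    if "N k \<le> \<bar>t\<bar>" "\<bar>t\<bar> \<le> N k + real (Suc k)" for k t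
    using F_plateau[OF that] F_nonneg[of t] F_nonneg[of "- t"]
    by (cases "0 \<le> t") (auto simp: w_def)
qed

theorem theorem1:
  fixes c :: "nat \<Rightarrow> real"
  assumes "filterlim (\<lambda>n. c (Suc n)) at_top sequentially"
  shows "\<exists>f :: real \<Rightarrow> real. continuous_on UNIV f \<and> integrable lborel f \<and>
           (\<forall>x. x \<noteq> 0 \<longrightarrow>
              limsup (\<lambda>n. ereal (c (Suc n) * f (real (Suc n) * x))) = \<infinity>)"
proof -
  obtain M where M: "\<And>B n. M B \<le> n \<Longrightarrow> B \<le> c (Suc n)"
    using assms unfolding filterlim_at_top eventually_sequentially by metis
  define N where "N k = real (Suc k) * (real (M (real (Suc k) ^ 4)) + real (Suc k))" for k
  obtain f where "continuous_on UNIV f" "integrable lborel f"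
    and f_plateau: "\<And>k t. N k \<le> \<bar>t\<bar> \<Longrightarrow> \<bar>t\<bar> \<le> N k + real (Suc k) \<Longrightarrow> 1 / real (Suc k) ^ 3 \<le> f t"
    using exists_integrable_with_plateaus[of N] by blast
  moreover have "limsup (\<lambda>n. ereal (c (Suc n) * f (real (Suc n) * x))) = \<infinity>" if "x \<noteq> 0" for x
    by (rule limsup_dilates_eq_PInfty_if_plateaus[where M = M and N = N])
      (fact M, simp add: N_def, fact f_plateau, fact that)
  ultimately show ?thesis
    by blast
qed

end
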